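(* Let $k,\ell\in\mathbb{N}$ and let $V$ be a finite set with $|V|\ge 2k\ge 2\ell$. For any function $f\colon\binom{V}{k}\to\mathbb{R}$, the following are equivalent: (i) $W^k(f)=W^{k-1}(f)=\cdots=W^{\ell}(f)=0$; (ii) there exists a unique function $h\colon\binom{V}{\ell-1}\to\mathbb{R}$ such that for all $R\in\binom{V}{k}$, $f(R)=\sum_{S\subset R,\,|S|=\ell-1}h(S)$.
   Context: $\binom{X}{k}$ denotes the family of $k$-element subsets of $X$. An $s$-permutation of $V$ is a sequence of $s$ distinct elements of $V$. For $k,r\in\mathbb{N}$, a finite set $V$ with $|V|\ge 2k\ge 2r$ and $f\colon\binom{V}{k}\to\mathbb{R}$, the level-$r$ weight of $f$ is \[ W^r(f)=\left(\mathbb{E}_{(a_1,b_1,\ldots,a_r,b_r)}\Big(\mathbb{E}_{R}\,(-1)^{|R\cap\{b_1,\ldots,b_r\}|}f(R)\Big)^2\right)^{1/2}, \] where $(a_1,b_1,\ldots,a_r,b_r)$ is a uniformly random $2r$-permutation of $V$, and, given it, $R$ is a uniformly random $k$-subset of $V$ with $|R\cap\{a_i,b_i\}|=1$ for each $i\in[r]$. *)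

theory Defs
  imports Complex_Main "HOL-Library.FuncSet"
begin

text \<open>The 2r-permutations of V: lists (a_1,b_1,...,a_r,b_r) of 2r distinct elements of V.
  We index from 0: a_i = xs!(2i), b_i = xs!(2i+1) for i < r.\<close>
definition perms2 :: "'a set \<Rightarrow> nat \<Rightarrow> 'a list set" where
  "perms2 V r = {xs. distinct xs \<and> length xs = 2 * r \<and> set xs \<subseteq> V}"

definition bset :: "nat \<Rightarrow> 'a list \<Rightarrow> 'a set" where
  "bset r xs = {xs ! (2 * i + 1) | i. i < r}"

definition admissible :: "'a set \<Rightarrow> nat \<Rightarrow> nat \<Rightarrow> 'a list \<Rightarrow> 'a set set" where
  "admissible V k r xs = {R. R \<subseteq> V \<and> card R = k \<and>
      (\<forall>i<r. card (R \<inter> {xs ! (2 * i), xs ! (2 * i + 1)}) = 1)}"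

definition inner_exp :: "'a set \<Rightarrow> nat \<Rightarrow> nat \<Rightarrow> ('a set \<Rightarrow> real) \<Rightarrow> 'a list \<Rightarrow> real" where
  "inner_exp V k r f xs =
     (\<Sum>R\<in>admissible V k r xs. (-1) ^ card (R \<inter> bset r xs) * f R) / real (card (admissible V k r xs))"

definition level_weight :: "'a set \<Rightarrow> nat \<Rightarrow> nat \<Rightarrow> ('a set \<Rightarrow> real) \<Rightarrow> real" where
  "level_weight V k r f =
     sqrt ((\<Sum>xs\<in>perms2 V r. (inner_exp V k r f xs)\<^sup>2) / real (card (perms2 V r)))"

end

theory Submission
  imports Defs
begin

text \<open>
  W^r(f) vanishes iff, for every 2r-permutation, the signed sum of f over the admissible
  k-sets R, with sign (-1)^|R \<inter> {b_1, ..., b_r}|, vanishes.  A lift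
  f R = (\<Sum>S \<subseteq> R, |S| = d. h S) with d < r has vanishing signed sums: S misses some
  pair {a_i, b_i}, and exchanging a_i and b_i is a sign-reversing involution on the admissible
  supersets of S.  Conversely, let f be a lift of h from level j with vanishing level-j signed
  sums.  Up to the positive factor (|V| - 2j choose k - j) these are the level-j signed sums of h
  itself, i.e. the inner products of h with the transversal signs of the 2j-permutations.
  Every function on j-sets is a lift from level j - 1 plus a combination of transversal signs,
  and lifts from level j - 1 are orthogonal to transversal signs; hence h, and with it f, is a
  lift from level j - 1.  Descending from j = k to j = l represents f as a lift from level
  l - 1, and the representation is unique because lifting from (l - 1)-sets to k-sets is
  injective when (l - 1) + k \<le> |V|.
\<close>

section \<open>Pairs and admissible sets\<close>

abbreviation pair_at :: "'a list \<Rightarrow> nat \<Rightarrow> 'a set" where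
  "pair_at xs i \<equiv> {xs ! (2 * i), xs ! (2 * i + 1)}"

lemma finite_perms2: "finite V \<Longrightarrow> finite (perms2 V r)"
  unfolding perms2_def
  by (rule finite_subset[OF _ finite_lists_length_eq[of V "2 * r"]]) auto

lemma finite_admissible: "finite V \<Longrightarrow> finite (admissible V k r xs)"
  unfolding admissible_def by (rule finite_subset[of _ "Pow V"]) auto

lemma pair_at_subset_set: "length xs = 2 * r \<Longrightarrow> i < r \<Longrightarrow> pair_at xs i \<subseteq> set xs"
  by simp

lemma in_set_imp_in_pair_at:
  assumes "length xs = 2 * r" "x \<in> set xs"
  shows "\<exists>i<r. x \<in> pair_at xs i"
proof -
  obtain p where p: "p < 2 * r" "x = xs ! p"
    using assms by (auto simp: in_set_conv_nth)
  have "p = 2 * (p div 2) \<or> p = 2 * (p div 2) + 1" "p div 2 < r"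
    using p(1) by presburger+
  then show ?thesis
    using p(2) by (metis insertCI)
qed

lemma pair_at_disjoint:
  assumes "distinct xs" "length xs = 2 * r" "i < r" "j < r" "i \<noteq> j"
  shows "pair_at xs i \<inter> pair_at xs j = {}"
  using assms by (auto simp: nth_eq_iff_index_eq)

lemma pair_at_neq:
  "distinct xs \<Longrightarrow> length xs = 2 * r \<Longrightarrow> i < r \<Longrightarrow> xs ! (2 * i) \<noteq> xs ! (2 * i + 1)"
  by (simp add: nth_eq_iff_index_eq)

lemma bset_subset_set: "length xs = 2 * r \<Longrightarrow> bset r xs \<subseteq> set xs"
  unfolding bset_def by auto

lemma nth_odd_in_bset: "i < r \<Longrightarrow> xs ! (2 * i + 1) \<in> bset r xs"
  unfolding bset_def by auto

lemma nth_even_notin_bset: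
  assumes "distinct xs" "length xs = 2 * r" "i < r"
  shows "xs ! (2 * i) \<notin> bset r xs"
proof
  assume "xs ! (2 * i) \<in> bset r xs"
  then obtain j where "j < r" "xs ! (2 * i) = xs ! (2 * j + 1)"
    unfolding bset_def by auto
  then have "2 * i = 2 * j + 1"
    using assms by (simp add: nth_eq_iff_index_eq)
  then show False
    by presburger
qed

lemma card_ge_if_meets_all_pairs:
  assumes "distinct xs" "length xs = 2 * r" "finite S"
    and meets: "\<forall>i<r. S \<inter> pair_at xs i \<noteq> {}"
  shows "r \<le> card (S \<inter> set xs)"
proof -
  define p where "p i = (SOME x. x \<in> S \<inter> pair_at xs i)" for i
  have p: "p i \<in> S \<inter> pair_at xs i" if "i < r" for i
    using meets that unfolding p_def by (metis some_in_eq)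
  have "inj_on p {..<r}"
  proof (rule inj_onI)
    fix i j
    assume "i \<in> {..<r}" "j \<in> {..<r}" "p i = p j"
    then show "i = j"
      using p pair_at_disjoint[OF assms(1,2)] by (metis Int_iff empty_iff lessThan_iff)
  qed
  moreover have "p ` {..<r} \<subseteq> S \<inter> set xs"
    using p pair_at_subset_set[OF assms(2)] by blast
  ultimately show ?thesis
    using card_inj_on_le[of p "{..<r}" "S \<inter> set xs"] assms(3) by simp
qed

lemma exists_pair_at_disjoint:
  assumes "distinct xs" "length xs = 2 * r" "finite S" "card S < r"
  shows "\<exists>i<r. S \<inter> pair_at xs i = {}"
proof (rule ccontr)
  assume "\<not> ?thesis"
  then have "r \<le> card (S \<inter> set xs)"
    using card_ge_if_meets_all_pairs assms(1-3) by blast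
  moreover have "card (S \<inter> set xs) \<le> card S"
    using assms(3) by (simp add: card_mono)
  ultimately show False
    using assms(4) by simp
qed

lemma transversal_subset_set:
  assumes "distinct xs" "length xs = 2 * r" "finite S" "card S = r"
    and "\<forall>i<r. card (S \<inter> pair_at xs i) = 1"
  shows "S \<subseteq> set xs"
proof -
  have "\<forall>i<r. S \<inter> pair_at xs i \<noteq> {}"
    using assms(5) by (metis card.empty zero_neq_one)
  then have "r \<le> card (S \<inter> set xs)"
    by (rule card_ge_if_meets_all_pairs[OF assms(1-3)])
  then have "S \<inter> set xs = S"
    using assms(3,4) by (metis Int_lower1 card_seteq)
  then show ?thesis
    by blast
qed

definition signed_sum :: "'a set \<Rightarrow> nat \<Rightarrow> nat \<Rightarrow> ('a set \<Rightarrow> real) \<Rightarrow> 'a list \<Rightarrow> real" where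
  "signed_sum V k r f xs = (\<Sum>R\<in>admissible V k r xs. (-1) ^ card (R \<inter> bset r xs) * f R)"

lemma level_weight_eq_0_iff:
  assumes "finite V"
  shows "level_weight V k r f = 0 \<longleftrightarrow> (\<forall>xs\<in>perms2 V r. signed_sum V k r f xs = 0)"
proof -
  have inner: "inner_exp V k r f xs = 0 \<longleftrightarrow> signed_sum V k r f xs = 0" for xs
    using finite_admissible[OF assms] unfolding inner_exp_def signed_sum_def
    by (cases "admissible V k r xs = {}") auto
  have "level_weight V k r f = 0 \<longleftrightarrow> (\<Sum>xs\<in>perms2 V r. (inner_exp V k r f xs)\<^sup>2) = 0"
    using finite_perms2[OF assms] by (auto simp: level_weight_def)
  also have "\<dots> \<longleftrightarrow> (\<forall>xs\<in>perms2 V r. inner_exp V k r f xs = 0)"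
    using finite_perms2[OF assms] by (simp add: sum_nonneg_eq_0_iff)
  finally show ?thesis
    using inner by simp
qed

section \<open>Lifts from lower levels\<close>

text \<open>The level is an integer: for l = 0 the theorem lifts from level -1, i.e. sums over no sets.\<close>
definition subsets_sum :: "int \<Rightarrow> ('a set \<Rightarrow> real) \<Rightarrow> 'a set \<Rightarrow> real" where
  "subsets_sum d g S = (\<Sum>U | U \<subseteq> S \<and> int (card U) = d. g U)"

lemma subsets_sum_nat: "subsets_sum (int m) g S = (\<Sum>U | U \<subseteq> S \<and> card U = m. g U)"
  unfolding subsets_sum_def by simp

lemma subsets_sum_neg: "d < 0 \<Longrightarrow> subsets_sum d g S = 0"
  unfolding subsets_sum_def by (simp add: sum.neutral)

lemma subsets_sum_cong:
  "(\<And>U. U \<subseteq> S \<Longrightarrow> int (card U) = d \<Longrightarrow> g U = g' U) \<Longrightarrow> subsets_sum d g S = subsets_sum d g' S"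
  unfolding subsets_sum_def by (rule sum.cong) auto

lemma subsets_sum_add: "subsets_sum d (\<lambda>U. g U + g' U) S = subsets_sum d g S + subsets_sum d g' S"
  unfolding subsets_sum_def by (simp add: sum.distrib)

lemma subsets_sum_diff: "subsets_sum d (\<lambda>U. g U - g' U) S = subsets_sum d g S - subsets_sum d g' S"
  unfolding subsets_sum_def by (simp add: sum_subtractf)

lemma subsets_sum_mult: "subsets_sum d (\<lambda>U. c * g U) S = c * subsets_sum d g S"
  unfolding subsets_sum_def by (simp add: sum_distrib_left)

lemma subsets_sum_self: "finite S \<Longrightarrow> subsets_sum (int (card S)) g S = g S"
proof -
  assume "finite S"
  then have "{U. U \<subseteq> S \<and> card U = card S} = {S}"
    using card_subset_eq by blast
  then show ?thesis
    by (simp add: subsets_sum_nat)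
qed

lemma card_supersets:
  assumes "finite X" "U \<subseteq> X" "card U \<le> k"
  shows "card {R. R \<subseteq> X \<and> card R = k \<and> U \<subseteq> R} = (card X - card U) choose (k - card U)"
proof -
  have fin: "finite U"
    using assms(1,2) finite_subset by blast
  define T where "T = {T. T \<subseteq> X - U \<and> card T = k - card U}"
  have "{R. R \<subseteq> X \<and> card R = k \<and> U \<subseteq> R} = (\<union>) U ` T"
  proof (intro equalityI subsetI)
    fix R
    assume R: "R \<in> {R. R \<subseteq> X \<and> card R = k \<and> U \<subseteq> R}"
    then have "R - U \<in> T"
      using fin unfolding T_def by (auto simp: card_Diff_subset)
    moreover have "R = U \<union> (R - U)"
      using R by auto
    ultimately show "R \<in> (\<union>) U ` T"
      by blast
  next
    fix R
    assume "R \<in> (\<union>) U ` T"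
    then obtain W where W: "W \<subseteq> X - U" "card W = k - card U" "R = U \<union> W"
      unfolding T_def by blast
    have "finite W" "U \<inter> W = {}"
      using W(1) assms(1) finite_subset by auto
    then have "card R = card U + (k - card U)"
      using W fin by (simp add: card_Un_disjoint)
    then show "R \<in> {R. R \<subseteq> X \<and> card R = k \<and> U \<subseteq> R}"
      using W assms by auto
  qed
  moreover have "inj_on ((\<union>) U) T"
    unfolding T_def inj_on_def by blast
  ultimately have "card {R. R \<subseteq> X \<and> card R = k \<and> U \<subseteq> R} = card T"
    by (simp add: card_image)
  also have "\<dots> = card (X - U) choose (k - card U)"
    unfolding T_def using assms(1) by (simp add: n_subsets)
  finally show ?thesis
    using assms(2) fin by (simp add: card_Diff_subset)
qed

lemma subsets_sum_subsets_sum: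
  assumes "finite S" "m \<le> j"
  shows "subsets_sum (int j) (subsets_sum (int m) g) S
    = real ((card S - m) choose (j - m)) * subsets_sum (int m) g S"
proof -
  define A where "A = {W. W \<subseteq> S \<and> card W = j}"
  define B where "B = {U. U \<subseteq> S \<and> card U = m}"
  have fin: "finite A" "finite B"
    unfolding A_def B_def using assms(1) by simp_all
  have "subsets_sum (int j) (subsets_sum (int m) g) S = (\<Sum>W\<in>A. \<Sum>U\<in>{U\<in>B. U \<subseteq> W}. g U)"
    unfolding subsets_sum_nat A_def B_def by (intro sum.cong refl) auto
  also have "\<dots> = (\<Sum>U\<in>B. \<Sum>W | W \<in> A \<and> U \<subseteq> W. g U)"
    by (rule sum.swap_restrict[OF fin])
  also have "\<dots> = (\<Sum>U\<in>B. real ((card S - m) choose (j - m)) * g U)"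
  proof (rule sum.cong[OF refl])
    fix U
    assume "U \<in> B"
    then have "card {W. W \<in> A \<and> U \<subseteq> W} = (card S - m) choose (j - m)"
      using card_supersets[OF assms(1), of U j] assms(2) unfolding A_def B_def by simp
    then show "(\<Sum>W | W \<in> A \<and> U \<subseteq> W. g U) = real ((card S - m) choose (j - m)) * g U"
      by simp
  qed
  finally show ?thesis
    unfolding subsets_sum_nat B_def by (simp add: sum_distrib_left)
qed

lemma subsets_sum_subsets_sum_pred:
  assumes "finite S" "j \<le> card S"
  shows "subsets_sum (int j) (subsets_sum (int j - 1) g) S
    = real (card S - j + 1) * subsets_sum (int j - 1) g S"
proof (cases j)
  case 0
  then show ?thesis
    by (simp add: subsets_sum_neg subsets_sum_def)
next
  case (Suc m)
  then have "(card S - m) choose (j - m) = card S - j + 1"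
    using assms(2) by simp
  then show ?thesis
    using subsets_sum_subsets_sum[OF assms(1), of m j g] Suc by simp
qed

lemma subsets_of_insert:
  assumes "finite Q" "a \<notin> Q"
  shows "{U. U \<subseteq> insert a Q \<and> int (card U) = d + 1}
    = {U. U \<subseteq> Q \<and> int (card U) = d + 1} \<union> insert a ` {X. X \<subseteq> Q \<and> int (card X) = d}"
proof -
  have card_insert: "card (insert a X) = Suc (card X)" if "X \<subseteq> Q" for X
  proof -
    have "finite X" "a \<notin> X"
      using that assms rev_finite_subset by blast+
    then show ?thesis
      by simp
  qed
  show ?thesis
  proof (intro equalityI subsetI)
    fix U
    assume U: "U \<in> {U. U \<subseteq> insert a Q \<and> int (card U) = d + 1}"
    show "U \<in> {U. U \<subseteq> Q \<and> int (card U) = d + 1} \<union> insert a ` {X. X \<subseteq> Q \<and> int (card X) = d}"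
    proof (cases "a \<in> U")
      case True
      have sub: "U - {a} \<subseteq> Q"
        using U by auto
      have "card U = Suc (card (U - {a}))"
        using card_insert[OF sub] True by (simp add: insert_absorb)
      then have "U - {a} \<in> {X. X \<subseteq> Q \<and> int (card X) = d}"
        using U sub by simp
      moreover have "U = insert a (U - {a})"
        using True by auto
      ultimately show ?thesis
        by blast
    next
      case False
      then show ?thesis
        using U by blast
    qed
  next
    fix U
    assume "U \<in> {U. U \<subseteq> Q \<and> int (card U) = d + 1} \<union> insert a ` {X. X \<subseteq> Q \<and> int (card X) = d}"
    then show "U \<in> {U. U \<subseteq> insert a Q \<and> int (card U) = d + 1}"
      using card_insert by auto
  qed
qed

lemma subsets_sum_insert:
  assumes "finite Q" "a \<notin> Q"
  shows "subsets_sum (d + 1) g (insert a Q)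
    = subsets_sum (d + 1) g Q + subsets_sum d (\<lambda>X. g (insert a X)) Q"
proof -
  define P where "P = {X. X \<subseteq> Q \<and> int (card X) = d}"
  have "inj_on (insert a) P"
  proof (rule inj_onI)
    fix X Y
    assume "X \<in> P" "Y \<in> P" "insert a X = insert a Y"
    moreover have "a \<notin> X" "a \<notin> Y"
      using calculation(1,2) assms(2) unfolding P_def by auto
    ultimately show "X = Y"
      by (simp add: insert_ident)
  qed
  moreover have "{U. U \<subseteq> Q \<and> int (card U) = d + 1} \<inter> insert a ` P = {}"
    using assms(2) by auto
  ultimately show ?thesis
    unfolding subsets_sum_def subsets_of_insert[OF assms] P_def[symmetric]
    using assms(1) by (simp add: sum.union_disjoint sum.reindex P_def)
qed

lemma subsets_sum_indicator:
  assumes "finite S"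
  shows "subsets_sum (int (card U)) (\<lambda>W. if W = U then 1 else 0) S = (if U \<subseteq> S then 1 else 0)"
  unfolding subsets_sum_def using assms by (subst sum.delta) auto

lemma exchange_connected:
  assumes V: "finite V"
    and refl: "\<And>X. P X X"
    and trans: "\<And>X Y Z. P X Y \<Longrightarrow> P Y Z \<Longrightarrow> P X Z"
    and exchange: "\<And>T a b. a \<in> V \<Longrightarrow> b \<in> V \<Longrightarrow> a \<noteq> b \<Longrightarrow> T \<subseteq> V - {a, b} \<Longrightarrow> card T = j \<Longrightarrow>
      P (insert a T) (insert b T)"
    and S: "S \<subseteq> V" "card S = Suc j" and S': "S' \<subseteq> V" "card S' = Suc j"
  shows "P S S'"
  using S
proof (induction "card (S - S')" arbitrary: S)
  case 0
  have fin: "finite S" "finite S'"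
    using 0 S' V finite_subset by blast+
  then have "S \<subseteq> S'"
    using "0.hyps" by simp
  then have "S = S'"
    using card_subset_eq[OF fin(2)] "0.prems"(2) S'(2) by simp
  then show ?case
    using refl by simp
next
  case (Suc n)
  have fin: "finite S" "finite S'"
    using Suc.prems S' V finite_subset by blast+
  have "S - S' \<noteq> {}"
    using Suc.hyps(2) by (metis card.empty nat.distinct(1))
  then obtain x where x: "x \<in> S" "x \<notin> S'"
    by blast
  have "\<not> S' \<subseteq> S"
    using card_subset_eq[OF fin(1), of S'] Suc.prems(2) S'(2) x by auto
  then obtain y where y: "y \<in> S'" "y \<notin> S"
    by blast
  define T where "T = S - {x}"
  have T: "card T = j" "S = insert x T" "T \<subseteq> V - {x, y}"
    using Suc.prems x y fin(1) unfolding T_def by auto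
  have "P S (insert y T)"
    using exchange[OF _ _ _ T(3,1)] x y Suc.prems(1) S'(1) T(2) by auto
  moreover have "P (insert y T) S'"
  proof (rule Suc.hyps(1))
    have "insert y T - S' = (S - S') - {x}"
      using x y unfolding T_def by auto
    then show "n = card (insert y T - S')"
      using Suc.hyps(2) x by simp
    show "insert y T \<subseteq> V" "card (insert y T) = Suc j"
      using y S' T fin(1) unfolding T_def by auto
  qed
  ultimately show ?case
    by (rule trans)
qed

lemma subsets_sum_avoiding:
  assumes "finite Q"
  shows "subsets_sum d (\<lambda>X. if b \<notin> X then g X else 0) Q = subsets_sum d g (Q - {b})"
proof -
  have "subsets_sum d (\<lambda>X. if b \<notin> X then g X else 0) Q
      = (\<Sum>X\<in>{X\<in>{X. X \<subseteq> Q \<and> int (card X) = d}. b \<notin> X}. g X)"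
    unfolding subsets_sum_def by (rule sum.inter_filter[symmetric]) (simp add: assms)
  also have "{X\<in>{X. X \<subseteq> Q \<and> int (card X) = d}. b \<notin> X} = {X. X \<subseteq> Q - {b} \<and> int (card X) = d}"
    by blast
  finally show ?thesis
    unfolding subsets_sum_def .
qed

lemma subsets_sum_containing:
  assumes "finite S" "a \<noteq> b"
  shows "subsets_sum (d + 1) (\<lambda>W. if a \<in> W \<and> b \<notin> W then g (W - {a}) else 0) S
    = (if a \<in> S then subsets_sum d g (S - {a, b}) else 0)"
    (is "subsets_sum (d + 1) ?F S = _")
proof (cases "a \<in> S")
  case True
  define Q where "Q = S - {a}"
  have Q: "finite Q" "a \<notin> Q" "S = insert a Q"
    unfolding Q_def using assms(1) True by auto
  have "subsets_sum (d + 1) ?F Q = 0"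
    unfolding subsets_sum_def using Q(2) by (intro sum.neutral) auto
  moreover have "subsets_sum d (\<lambda>X. ?F (insert a X)) Q = subsets_sum d (\<lambda>X. if b \<notin> X then g X else 0) Q"
  proof (rule subsets_sum_cong)
    fix X
    assume "X \<subseteq> Q"
    then have "a \<notin> X"
      using Q(2) by blast
    then show "?F (insert a X) = (if b \<notin> X then g X else 0)"
      using assms(2) by simp
  qed
  ultimately have "subsets_sum (d + 1) ?F S = subsets_sum d g (Q - {b})"
    using subsets_sum_insert[OF Q(1,2)] subsets_sum_avoiding[OF Q(1)] Q(3) by simp
  also have "Q - {b} = S - {a, b}"
    unfolding Q_def by blast
  finally show ?thesis
    using True by simp
next
  case False
  then have "subsets_sum (d + 1) ?F S = 0"
    unfolding subsets_sum_def by (intro sum.neutral) auto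
  then show ?thesis
    using False by simp
qed

section \<open>Signed sums of lifts\<close>

definition signed_supersets :: "'a set \<Rightarrow> nat \<Rightarrow> nat \<Rightarrow> 'a list \<Rightarrow> 'a set \<Rightarrow> real" where
  "signed_supersets V k r xs U =
     (\<Sum>R | R \<in> admissible V k r xs \<and> U \<subseteq> R. (-1) ^ card (R \<inter> bset r xs))"

lemma signed_sum_subsets_sum:
  assumes "finite V"
  shows "signed_sum V k r (subsets_sum d g) xs
    = (\<Sum>U | U \<subseteq> V \<and> int (card U) = d. g U * signed_supersets V k r xs U)"
proof -
  define A where "A = admissible V k r xs"
  define B where "B = {U. U \<subseteq> V \<and> int (card U) = d}"
  have fin: "finite A" "finite B"
    unfolding A_def B_def using finite_admissible[OF assms] assms by simp_all
  have "signed_sum V k r (subsets_sum d g) xs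
      = (\<Sum>R\<in>A. \<Sum>U\<in>{U\<in>B. U \<subseteq> R}. (-1) ^ card (R \<inter> bset r xs) * g U)"
    unfolding signed_sum_def subsets_sum_def A_def B_def sum_distrib_left
    by (intro sum.cong refl) (auto simp: admissible_def)
  also have "\<dots> = (\<Sum>U\<in>B. \<Sum>R | R \<in> A \<and> U \<subseteq> R. (-1) ^ card (R \<inter> bset r xs) * g U)"
    by (rule sum.swap_restrict[OF fin])
  also have "\<dots> = (\<Sum>U\<in>B. g U * signed_supersets V k r xs U)"
    unfolding signed_supersets_def A_def by (simp add: sum_distrib_left mult.commute)
  finally show ?thesis
    unfolding B_def .
qed

lemma admissible_exchange:
  assumes "finite V" and xs: "xs \<in> perms2 V r" and i: "i < r" and pair: "pair_at xs i = {x, y}"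
    and R: "R \<in> admissible V k r xs" "x \<in> R" "y \<notin> R"
  shows "insert y (R - {x}) \<in> admissible V k r xs"
proof -
  let ?R' = "insert y (R - {x})"
  have xs': "distinct xs" "length xs = 2 * r" "set xs \<subseteq> V"
    using xs unfolding perms2_def by auto
  have RV: "R \<subseteq> V" "card R = k" and one: "\<forall>j<r. card (R \<inter> pair_at xs j) = 1"
    using R(1) unfolding admissible_def by auto
  have finR: "finite R"
    using RV(1) assms(1) by (rule finite_subset)
  have "y \<in> V"
    using pair pair_at_subset_set[OF xs'(2) i] xs'(3) by blast
  then have "?R' \<subseteq> V"
    using RV(1) by blast
  moreover have "card ?R' = k"
    using card_Suc_Diff1[OF finR R(2)] finR R(3) RV(2) by simp
  moreover have "card (?R' \<inter> pair_at xs j) = 1" if j: "j < r" for j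
  proof (cases "j = i")
    case True
    then have "?R' \<inter> pair_at xs j = {y}"
      using pair R(3) by auto
    then show ?thesis
      by simp
  next
    case False
    then have "pair_at xs j \<inter> {x, y} = {}"
      using pair_at_disjoint[OF xs'(1,2) j i] unfolding pair by blast
    then have "?R' \<inter> pair_at xs j = R \<inter> pair_at xs j"
      by blast
    then show ?thesis
      using one j by simp
  qed
  ultimately show ?thesis
    unfolding admissible_def by blast
qed

lemma sign_bset_exchange:
  assumes "distinct xs" "length xs = 2 * r" "i < r" and pair: "pair_at xs i = {x, y}" "x \<noteq> y"
    and R: "finite R" "x \<in> R" "y \<notin> R"
  shows "(-1::real) ^ card (insert y (R - {x}) \<inter> bset r xs) = - ((-1) ^ card (R \<inter> bset r xs))"
proof -
  let ?R' = "insert y (R - {x})"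
  have B: "xs ! (2 * i) \<notin> bset r xs" "xs ! (2 * i + 1) \<in> bset r xs"
    using nth_even_notin_bset[OF assms(1-3)] nth_odd_in_bset[OF assms(3)] .
  have fin: "finite (R \<inter> bset r xs)" "finite (?R' \<inter> bset r xs)"
    using R(1) by simp_all
  consider "x = xs ! (2 * i)" "y = xs ! (2 * i + 1)" | "x = xs ! (2 * i + 1)" "y = xs ! (2 * i)"
    using pair by (auto simp: doubleton_eq_iff)
  then show ?thesis
  proof cases
    case 1
    then have "?R' \<inter> bset r xs = insert y (R \<inter> bset r xs)"
      using B by auto
    then show ?thesis
      using fin R(3) by simp
  next
    case 2
    then have "R \<inter> bset r xs = insert x (?R' \<inter> bset r xs)"
      using B R(2) by auto
    moreover have "x \<notin> ?R' \<inter> bset r xs"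
      using pair(2) by simp
    ultimately show ?thesis
      using fin by simp
  qed
qed

text \<open>Every admissible set contains exactly one of a and b; exchanging them is a
  sign-reversing involution on the admissible supersets of a set U avoiding both.\<close>
lemma signed_supersets_eq_0:
  assumes "finite V" and xs: "xs \<in> perms2 V r" and i: "i < r" and U: "U \<inter> pair_at xs i = {}"
  shows "signed_supersets V k r xs U = 0"
proof -
  define a where "a = xs ! (2 * i)"
  define b where "b = xs ! (2 * i + 1)"
  have ab: "a \<noteq> b"
    using xs i pair_at_neq unfolding a_def b_def perms2_def by blast
  define A where "A = {R. R \<in> admissible V k r xs \<and> U \<subseteq> R}"
  define \<sigma> where "\<sigma> R = (if a \<in> R then insert b (R - {a}) else insert a (R - {b}))" for R
  define s where "s R = (-1::real) ^ card (R \<inter> bset r xs)" for R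
  have xs': "distinct xs" "length xs = 2 * r"
    using xs unfolding perms2_def by auto
  have \<sigma>: "\<sigma> R \<in> A \<and> s (\<sigma> R) = - s R \<and> \<sigma> (\<sigma> R) = R" if R: "R \<in> A" for R
  proof -
    have R': "R \<in> admissible V k r xs" "U \<subseteq> R"
      using R unfolding A_def by auto
    then have finR: "finite R"
      using assms(1) finite_subset unfolding admissible_def by blast
    have "card (R \<inter> {a, b}) = 1"
      using R'(1) i unfolding admissible_def a_def b_def by auto
    then consider "a \<in> R" "b \<notin> R" | "b \<in> R" "a \<notin> R"
      using ab by (cases "a \<in> R"; cases "b \<in> R") (auto simp: Int_insert_right)
    then show ?thesis
    proof cases
      case 1
      note ex = admissible_exchange[OF assms(1) xs i _ R'(1) 1] sign_bset_exchange[OF xs' i _ ab finR 1]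
      show ?thesis
        using ex 1 ab R'(2) U unfolding A_def s_def \<sigma>_def a_def b_def by auto
    next
      case 2
      note ex = admissible_exchange[OF assms(1) xs i _ R'(1) 2]
        sign_bset_exchange[OF xs' i _ ab[symmetric] finR 2]
      show ?thesis
        using ex 2 ab R'(2) U unfolding A_def s_def \<sigma>_def a_def b_def by auto
    qed
  qed
  have "bij_betw \<sigma> A A"
    by (rule bij_betw_byWitness[where f' = \<sigma>]) (use \<sigma> in auto)
  then have "sum s A = sum (s \<circ> \<sigma>) A"
    by (simp add: sum.reindex_bij_betw)
  also have "\<dots> = - sum s A"
    using \<sigma> by (simp add: sum_negf[symmetric])
  finally show ?thesis
    unfolding signed_supersets_def A_def s_def by simp
qed

lemma signed_sum_subsets_sum_eq_0:
  assumes "finite V" "xs \<in> perms2 V r" "d < int r"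
  shows "signed_sum V k r (subsets_sum d g) xs = 0"
  unfolding signed_sum_subsets_sum[OF assms(1)]
proof (intro sum.neutral ballI)
  fix U
  assume U: "U \<in> {U. U \<subseteq> V \<and> int (card U) = d}"
  then have "finite U" "card U < r"
    using assms(1,3) finite_subset by auto
  then obtain i where "i < r" "U \<inter> pair_at xs i = {}"
    using exists_pair_at_disjoint assms(2) unfolding perms2_def by blast
  then show "g U * signed_supersets V k r xs U = 0"
    using signed_supersets_eq_0[OF assms(1,2)] by simp
qed

definition transversal_sign :: "nat \<Rightarrow> 'a list \<Rightarrow> 'a set \<Rightarrow> real" where
  "transversal_sign r xs S =
     (if card S = r \<and> (\<forall>i<r. card (S \<inter> pair_at xs i) = 1) then (-1) ^ card (S \<inter> bset r xs) else 0)"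

lemma sum_mult_transversal_sign:
  assumes "finite V"
  shows "(\<Sum>S | S \<subseteq> V \<and> card S = r. h S * transversal_sign r xs S) = signed_sum V r r h xs"
proof -
  define J where "J = {S. S \<subseteq> V \<and> card S = r}"
  have "(\<Sum>S\<in>J. h S * transversal_sign r xs S)
      = (\<Sum>S\<in>J. if S \<in> admissible V r r xs then (-1) ^ card (S \<inter> bset r xs) * h S else 0)"
    unfolding J_def transversal_sign_def admissible_def by (intro sum.cong refl) auto
  also have "\<dots> = (\<Sum>S\<in>{S\<in>J. S \<in> admissible V r r xs}. (-1) ^ card (S \<inter> bset r xs) * h S)"
    by (rule sum.inter_filter[symmetric]) (simp add: J_def assms)
  also have "{S\<in>J. S \<in> admissible V r r xs} = admissible V r r xs"
    unfolding J_def admissible_def by auto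
  finally show ?thesis
    unfolding J_def signed_sum_def .
qed

lemma admissible_supersets_transversal:
  assumes xs: "xs \<in> perms2 V r" and "S \<subseteq> V"
    and transversal: "\<forall>i<r. card (S \<inter> pair_at xs i) = 1"
  shows "{R. R \<in> admissible V k r xs \<and> S \<subseteq> R} = {R. R \<subseteq> S \<union> (V - set xs) \<and> card R = k \<and> S \<subseteq> R}"
proof -
  have len: "length xs = 2 * r"
    using xs unfolding perms2_def by auto
  show ?thesis
  proof (intro equalityI subsetI)
    fix R
    assume R: "R \<in> {R. R \<in> admissible V k r xs \<and> S \<subseteq> R}"
    have "x \<in> S" if x: "x \<in> R" "x \<in> set xs" for x
    proof -
      obtain i where i: "i < r" "x \<in> pair_at xs i"
        using in_set_imp_in_pair_at[OF len x(2)] by blast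
      have "S \<inter> pair_at xs i \<subseteq> R \<inter> pair_at xs i"
        using R by blast
      moreover have "card (S \<inter> pair_at xs i) = card (R \<inter> pair_at xs i)"
        using R i(1) transversal unfolding admissible_def by simp
      ultimately have "R \<inter> pair_at xs i = S \<inter> pair_at xs i"
        using card_subset_eq[of "R \<inter> pair_at xs i" "S \<inter> pair_at xs i"] by simp
      then show ?thesis
        using i(2) x(1) by blast
    qed
    then show "R \<in> {R. R \<subseteq> S \<union> (V - set xs) \<and> card R = k \<and> S \<subseteq> R}"
      using R unfolding admissible_def by blast
  next
    fix R
    assume R: "R \<in> {R. R \<subseteq> S \<union> (V - set xs) \<and> card R = k \<and> S \<subseteq> R}"
    have "R \<inter> pair_at xs i = S \<inter> pair_at xs i" if "i < r" for i
      using R pair_at_subset_set[OF len that] by blast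
    then show "R \<in> {R. R \<in> admissible V k r xs \<and> S \<subseteq> R}"
      using R transversal assms(2) unfolding admissible_def by auto
  qed
qed

lemma signed_supersets_transversal:
  assumes V: "finite V" and xs: "xs \<in> perms2 V r" and "r \<le> k" "S \<subseteq> V" "card S = r"
    and transversal: "\<forall>i<r. card (S \<inter> pair_at xs i) = 1"
  shows "signed_supersets V k r xs S
    = real ((card V - 2 * r) choose (k - r)) * (-1) ^ card (S \<inter> bset r xs)"
proof -
  have xs': "distinct xs" "length xs = 2 * r" "set xs \<subseteq> V"
    using xs unfolding perms2_def by auto
  have finS: "finite S"
    using assms(4) V by (rule finite_subset)
  have "S \<inter> (V - set xs) = {}"
    using transversal_subset_set[OF xs'(1,2) finS assms(5) transversal] by blast
  moreover have "card (V - set xs) = card V - 2 * r"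
    using V xs' by (simp add: card_Diff_subset distinct_card)
  ultimately have "card (S \<union> (V - set xs)) - card S = card V - 2 * r"
    using V finS by (simp add: card_Un_disjoint)
  then have "card {R. R \<subseteq> S \<union> (V - set xs) \<and> card R = k \<and> S \<subseteq> R} = (card V - 2 * r) choose (k - r)"
    using card_supersets[of "S \<union> (V - set xs)" S k] V finS assms(3,5) by simp
  moreover have "signed_supersets V k r xs S
      = (\<Sum>R | R \<subseteq> S \<union> (V - set xs) \<and> card R = k \<and> S \<subseteq> R. (-1) ^ card (S \<inter> bset r xs))"
    unfolding signed_supersets_def admissible_supersets_transversal[OF xs assms(4) transversal]
    using bset_subset_set[OF xs'(2)] by (intro sum.cong refl arg_cong[where f = "\<lambda>n. (-1) ^ card n"]) blast
  ultimately show ?thesis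
    by simp
qed

lemma signed_supersets_eq_transversal_sign:
  assumes V: "finite V" and xs: "xs \<in> perms2 V r" and "r \<le> k" "S \<subseteq> V" "card S = r"
  shows "signed_supersets V k r xs S = real ((card V - 2 * r) choose (k - r)) * transversal_sign r xs S"
proof (cases "\<forall>i<r. card (S \<inter> pair_at xs i) = 1")
  case True
  then show ?thesis
    using signed_supersets_transversal[OF assms True] assms(5) unfolding transversal_sign_def by simp
next
  case False
  then obtain i where i: "i < r" "card (S \<inter> pair_at xs i) \<noteq> 1"
    by blast
  then consider "S \<inter> pair_at xs i = {}" | "pair_at xs i \<subseteq> S"
    by (cases "xs ! (2 * i) \<in> S"; cases "xs ! (2 * i + 1) \<in> S") (auto simp: Int_insert_right)
  then have "signed_supersets V k r xs S = 0"
  proof cases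
    case 1
    then show ?thesis
      using signed_supersets_eq_0[OF V xs i(1)] by blast
  next
    case 2
    have "card (pair_at xs i) = 2"
      using pair_at_neq[of xs r i] xs i(1) unfolding perms2_def by simp
    have "R \<notin> admissible V k r xs" if "S \<subseteq> R" for R
    proof
      assume "R \<in> admissible V k r xs"
      then have "card (R \<inter> pair_at xs i) = 1"
        using i(1) unfolding admissible_def by blast
      moreover have "R \<inter> pair_at xs i = pair_at xs i"
        using 2 that by blast
      ultimately show False
        using \<open>card (pair_at xs i) = 2\<close> by simp
    qed
    then have none: "{R. R \<in> admissible V k r xs \<and> S \<subseteq> R} = {}"
      by blast
    show ?thesis
      unfolding signed_supersets_def by (simp only: none sum.empty)
  qed
  moreover have "transversal_sign r xs S = 0"
    using False by (auto simp: transversal_sign_def)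
  ultimately show ?thesis
    by simp
qed

lemma signed_sum_subsets_sum_same_level:
  assumes "finite V" "xs \<in> perms2 V r" "r \<le> k"
  shows "signed_sum V k r (subsets_sum (int r) h) xs
    = real ((card V - 2 * r) choose (k - r)) * signed_sum V r r h xs"
proof -
  have "signed_sum V k r (subsets_sum (int r) h) xs
      = (\<Sum>S | S \<subseteq> V \<and> card S = r. h S * signed_supersets V k r xs S)"
    using signed_sum_subsets_sum[OF assms(1)] by simp
  also have "\<dots> = (\<Sum>S | S \<subseteq> V \<and> card S = r.
      real ((card V - 2 * r) choose (k - r)) * (h S * transversal_sign r xs S))"
    using signed_supersets_eq_transversal_sign[OF assms] by (intro sum.cong refl) simp
  also have "\<dots> = real ((card V - 2 * r) choose (k - r)) * signed_sum V r r h xs"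
    by (simp add: sum_distrib_left[symmetric] sum_mult_transversal_sign[OF assms(1)])
  finally show ?thesis .
qed

section \<open>Antisymmetrization\<close>

definition antisymmetrize :: "'a \<Rightarrow> 'a \<Rightarrow> ('a set \<Rightarrow> real) \<Rightarrow> 'a set \<Rightarrow> real" where
  "antisymmetrize a b \<phi> S =
     (if a \<in> S \<and> b \<notin> S then \<phi> (S - {a}) else 0) - (if b \<in> S \<and> a \<notin> S then \<phi> (S - {b}) else 0)"

lemma antisymmetrize_add:
  "antisymmetrize a b (\<lambda>S. \<phi> S + \<psi> S) S = antisymmetrize a b \<phi> S + antisymmetrize a b \<psi> S"
  unfolding antisymmetrize_def by simp

lemma antisymmetrize_sum:
  "antisymmetrize a b (\<lambda>S. \<Sum>x\<in>A. c x * F x S) S = (\<Sum>x\<in>A. c x * antisymmetrize a b (F x) S)"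
  unfolding antisymmetrize_def by (cases "a \<in> S"; cases "b \<in> S") (simp_all add: sum_negf)

lemma antisymmetrize_cong:
  assumes "\<And>S. S \<subseteq> V - {a, b} \<Longrightarrow> card S = j \<Longrightarrow> \<phi> S = \<psi> S"
    and "finite S" "S \<subseteq> V" "card S = Suc j"
  shows "antisymmetrize a b \<phi> S = antisymmetrize a b \<psi> S"
proof -
  have "\<phi> (S - {c}) = \<psi> (S - {c})" if "c \<in> S" "{a, b} - {c} \<subseteq> - S" for c
    using that assms(2-4) by (intro assms(1)) auto
  then show ?thesis
    unfolding antisymmetrize_def by auto
qed

lemma antisymmetrize_indicator:
  assumes "a \<notin> T" "b \<notin> T" "a \<noteq> b"
  shows "antisymmetrize a b (\<lambda>S. if S = T then 1 else 0) S
    = (if S = insert a T then 1 else 0) - (if S = insert b T then 1 else 0)"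
  unfolding antisymmetrize_def using assms by auto

lemma subsets_sum_antisymmetrize:
  assumes "finite S" "a \<noteq> b"
  shows "subsets_sum (d + 1) (antisymmetrize a b g) S = antisymmetrize a b (subsets_sum d g) S"
proof -
  have "S - {b, a} = S - {a, b}" "b \<notin> S \<Longrightarrow> S - {a, b} = S - {a}" "a \<notin> S \<Longrightarrow> S - {a, b} = S - {b}"
    by auto
  then show ?thesis
    using subsets_sum_containing[OF assms, of d g] subsets_sum_containing[OF assms(1) assms(2)[symmetric], of d g]
    unfolding antisymmetrize_def subsets_sum_diff by (cases "a \<in> S"; cases "b \<in> S") simp_all
qed

lemma bset_Cons_Cons: "bset (Suc j) (a # b # xs) = insert b (bset j xs)"
proof -
  have "bset r ys = (\<lambda>i. ys ! (2 * i + 1)) ` {..<r}" for r and ys :: "'a list"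
    unfolding bset_def by auto
  then show ?thesis
    by (simp add: lessThan_Suc_eq_insert_0 image_image)
qed

lemma antisymmetrize_transversal_sign:
  assumes "a \<noteq> b" "length xs = 2 * j" "a \<notin> set xs" "b \<notin> set xs" "finite S"
  shows "antisymmetrize a b (transversal_sign j xs) S = transversal_sign (Suc j) (a # b # xs) S"
proof -
  have cond: "(\<forall>i<Suc j. card (S \<inter> pair_at (a # b # xs) i) = 1)
      \<longleftrightarrow> card (S \<inter> {a, b}) = 1 \<and> (\<forall>i<j. card (S \<inter> pair_at xs i) = 1)"
    by (auto simp: less_Suc_eq_0_disj)
  have off_pairs: "(S - {c}) \<inter> pair_at xs i = S \<inter> pair_at xs i" if "c \<notin> set xs" "i < j" for c i
    using that pair_at_subset_set[OF assms(2)] by blast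
  have card_minus: "card (S - {c}) = j \<longleftrightarrow> card S = Suc j" if "c \<in> S" for c
    using card_Suc_Diff1[OF assms(5) that] by linarith
  have B: "bset j xs \<subseteq> set xs"
    using bset_subset_set[OF assms(2)] .
  consider "a \<in> S" "b \<notin> S" | "b \<in> S" "a \<notin> S" | "a \<in> S \<longleftrightarrow> b \<in> S"
    by blast
  then show ?thesis
  proof cases
    case 1
    have "S \<inter> insert b (bset j xs) = (S - {a}) \<inter> bset j xs"
      using 1 B assms(3) by auto
    moreover have "card (S \<inter> {a, b}) = 1"
      using 1 by (simp add: Int_insert_right)
    ultimately show ?thesis
      using 1 off_pairs[OF assms(3)] card_minus[of a]
      unfolding antisymmetrize_def transversal_sign_def cond bset_Cons_Cons by simp
  next
    case 2
    have "S \<inter> insert b (bset j xs) = insert b ((S - {b}) \<inter> bset j xs)"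
      using 2 by auto
    moreover have "finite ((S - {b}) \<inter> bset j xs)" "b \<notin> (S - {b}) \<inter> bset j xs"
      using assms(5) by auto
    moreover have "card (S \<inter> {a, b}) = 1"
      using 2 by (simp add: Int_insert_right)
    ultimately show ?thesis
      using 2 off_pairs[OF assms(4)] card_minus[of b]
      unfolding antisymmetrize_def transversal_sign_def cond bset_Cons_Cons by simp
  next
    case 3
    then have "card (S \<inter> {a, b}) \<noteq> 1"
      using assms(1) by (cases "a \<in> S") (auto simp: Int_insert_right)
    then show ?thesis
      using 3 unfolding antisymmetrize_def transversal_sign_def cond by auto
  qed
qed

section \<open>Lifts and transversal signs span all functions\<close>

definition decomposable :: "'a set \<Rightarrow> nat \<Rightarrow> ('a set \<Rightarrow> real) \<Rightarrow> bool" where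
  "decomposable V j \<phi> \<longleftrightarrow> (\<exists>g c. \<forall>S. S \<subseteq> V \<and> card S = j \<longrightarrow>
     \<phi> S = subsets_sum (int j - 1) g S + (\<Sum>xs\<in>perms2 V j. c xs * transversal_sign j xs S))"

lemma decomposable_cong:
  "decomposable V j \<phi> \<Longrightarrow> (\<And>S. S \<subseteq> V \<Longrightarrow> card S = j \<Longrightarrow> \<psi> S = \<phi> S) \<Longrightarrow> decomposable V j \<psi>"
  unfolding decomposable_def by metis

lemma decomposable_zero: "decomposable V j (\<lambda>S. 0)"
  unfolding decomposable_def
  by (intro exI[of _ "\<lambda>U. 0"] exI[of _ "\<lambda>xs. 0"]) (simp add: subsets_sum_def)

lemma decomposable_subsets_sum: "decomposable V j (subsets_sum (int j - 1) g)"
  unfolding decomposable_def by (intro exI[of _ g] exI[of _ "\<lambda>xs. 0"]) simp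

lemma decomposable_add:
  assumes "decomposable V j \<phi>" "decomposable V j \<psi>"
  shows "decomposable V j (\<lambda>S. \<phi> S + \<psi> S)"
proof -
  obtain g c g' c' where
    "\<forall>S. S \<subseteq> V \<and> card S = j \<longrightarrow>
       \<phi> S = subsets_sum (int j - 1) g S + (\<Sum>xs\<in>perms2 V j. c xs * transversal_sign j xs S)"
    "\<forall>S. S \<subseteq> V \<and> card S = j \<longrightarrow>
       \<psi> S = subsets_sum (int j - 1) g' S + (\<Sum>xs\<in>perms2 V j. c' xs * transversal_sign j xs S)"
    using assms unfolding decomposable_def by blast
  then show ?thesis
    unfolding decomposable_def
    by (intro exI[of _ "\<lambda>U. g U + g' U"] exI[of _ "\<lambda>xs. c xs + c' xs"])
      (simp add: subsets_sum_add sum.distrib distrib_right)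
qed

lemma decomposable_mult:
  assumes "decomposable V j \<phi>"
  shows "decomposable V j (\<lambda>S. a * \<phi> S)"
proof -
  obtain g c where
    "\<forall>S. S \<subseteq> V \<and> card S = j \<longrightarrow>
       \<phi> S = subsets_sum (int j - 1) g S + (\<Sum>xs\<in>perms2 V j. c xs * transversal_sign j xs S)"
    using assms unfolding decomposable_def by blast
  then show ?thesis
    unfolding decomposable_def
    by (intro exI[of _ "\<lambda>U. a * g U"] exI[of _ "\<lambda>xs. a * c xs"])
      (simp add: subsets_sum_mult sum_distrib_left distrib_left mult.assoc)
qed

lemma decomposable_sum:
  "finite A \<Longrightarrow> (\<And>x. x \<in> A \<Longrightarrow> decomposable V j (F x)) \<Longrightarrow> decomposable V j (\<lambda>S. \<Sum>x\<in>A. F x S)"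
  by (induction A rule: finite_induct) (simp_all add: decomposable_zero decomposable_add)

lemma decomposable_level_0:
  assumes "finite V"
  shows "decomposable V 0 \<phi>"
  unfolding decomposable_def
proof (intro exI allI impI)
  fix S
  assume S: "S \<subseteq> V \<and> card S = 0"
  moreover have "finite S"
    using S assms finite_subset by blast
  ultimately have "S = {}"
    by simp
  moreover have "perms2 V 0 = {[]}"
    unfolding perms2_def by auto
  ultimately show "\<phi> S = subsets_sum (int 0 - 1) g S
      + (\<Sum>xs\<in>perms2 V 0. (\<lambda>xs. \<phi> {}) xs * transversal_sign 0 xs S)"
    by (simp add: subsets_sum_neg transversal_sign_def)
qed

lemma sum_perms2_Cons_Cons:
  fixes c :: "'a list \<Rightarrow> real"
  assumes "finite V" "a \<in> V" "b \<in> V" "a \<noteq> b"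
  shows "\<exists>c'. \<forall>F. (\<Sum>ys\<in>perms2 V (Suc j). c' ys * F ys)
    = (\<Sum>xs\<in>perms2 (V - {a, b}) j. c xs * F (a # b # xs))"
proof -
  define P where "P = (\<lambda>xs. a # b # xs) ` perms2 (V - {a, b}) j"
  define c' where "c' ys = (if ys \<in> P then c (drop 2 ys) else 0)" for ys
  have P: "P \<subseteq> perms2 V (Suc j)"
    unfolding P_def perms2_def using assms(2-4) by auto
  have "(\<Sum>ys\<in>perms2 V (Suc j). c' ys * F ys) = (\<Sum>xs\<in>perms2 (V - {a, b}) j. c xs * F (a # b # xs))"
    for F :: "'a list \<Rightarrow> real"
  proof -
    have "(\<Sum>ys\<in>perms2 V (Suc j). c' ys * F ys) = (\<Sum>ys\<in>P. c (drop 2 ys) * F ys)"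
      using P finite_perms2[OF assms(1)] unfolding c'_def by (intro sum.mono_neutral_cong_right) auto
    also have "\<dots> = (\<Sum>xs\<in>perms2 (V - {a, b}) j. c xs * F (a # b # xs))"
      unfolding P_def by (subst sum.reindex) (auto simp: inj_on_def)
    finally show ?thesis .
  qed
  then show ?thesis
    by blast
qed

lemma decomposable_antisymmetrize:
  assumes V: "finite V" and ab: "a \<in> V" "b \<in> V" "a \<noteq> b"
    and dec: "decomposable (V - {a, b}) j \<phi>"
  shows "decomposable V (Suc j) (antisymmetrize a b \<phi>)"
proof -
  let ?V' = "V - {a, b}"
  obtain g c where gc: "\<forall>S. S \<subseteq> ?V' \<and> card S = j \<longrightarrow>
      \<phi> S = subsets_sum (int j - 1) g S + (\<Sum>xs\<in>perms2 ?V' j. c xs * transversal_sign j xs S)"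
    using dec unfolding decomposable_def by blast
  obtain c' where c': "\<forall>F. (\<Sum>ys\<in>perms2 V (Suc j). c' ys * F ys)
      = (\<Sum>xs\<in>perms2 ?V' j. c xs * F (a # b # xs))"
    using sum_perms2_Cons_Cons[OF V ab] by blast
  show ?thesis
    unfolding decomposable_def
  proof (intro exI allI impI)
    fix S
    assume S: "S \<subseteq> V \<and> card S = Suc j"
    then have finS: "finite S"
      using V finite_subset by blast
    have "antisymmetrize a b \<phi> S = antisymmetrize a b
        (\<lambda>S. subsets_sum (int j - 1) g S + (\<Sum>xs\<in>perms2 ?V' j. c xs * transversal_sign j xs S)) S"
      using gc finS S by (intro antisymmetrize_cong[where V = V and j = j]) auto
    also have "\<dots> = subsets_sum (int (Suc j) - 1) (antisymmetrize a b g) S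
        + (\<Sum>xs\<in>perms2 ?V' j. c xs * transversal_sign (Suc j) (a # b # xs) S)"
    proof -
      have "antisymmetrize a b (transversal_sign j xs) S = transversal_sign (Suc j) (a # b # xs) S"
        if "xs \<in> perms2 ?V' j" for xs
        using that ab(3) finS by (intro antisymmetrize_transversal_sign) (auto simp: perms2_def)
      then show ?thesis
        using subsets_sum_antisymmetrize[OF finS ab(3), of "int j - 1" g]
        by (simp add: antisymmetrize_add antisymmetrize_sum)
    qed
    finally show "antisymmetrize a b \<phi> S = subsets_sum (int (Suc j) - 1) (antisymmetrize a b g) S
        + (\<Sum>ys\<in>perms2 V (Suc j). c' ys * transversal_sign (Suc j) ys S)"
      using c' by simp
  qed
qed

lemma sum_indicator_insert:
  assumes "finite V" "U \<subseteq> V" "S \<subseteq> V" "card S = Suc (card U)"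
  shows "(\<Sum>z\<in>V - U. if S = insert z U then 1 else 0) = (if U \<subseteq> S then 1 else (0::real))"
proof (cases "U \<subseteq> S")
  case True
  have "finite S" "finite U"
    using assms finite_subset by blast+
  then have "card (S - U) = 1"
    using True assms(4) by (simp add: card_Diff_subset)
  then obtain z where z: "S - U = {z}"
    by (rule card_1_singletonE)
  have "(if S = insert w U then 1 else 0) = (if w = z then 1 else (0::real))" if "w \<in> V - U" for w
    using that z True by auto
  then have "(\<Sum>w\<in>V - U. if S = insert w U then 1 else 0) = (\<Sum>w\<in>V - U. if w = z then 1 else (0::real))"
    by (rule sum.cong[OF refl])
  also have "\<dots> = 1"
    using z assms(1,3) by auto
  finally show ?thesis
    using True by simp
next
  case False
  then have "S \<noteq> insert w U" for w
    by blast
  then show ?thesis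
    using False by simp
qed

lemma decomposable_indicator:
  assumes V: "finite V" "j < card V"
    and diff: "\<And>X Y. X \<subseteq> V \<Longrightarrow> card X = Suc j \<Longrightarrow> Y \<subseteq> V \<Longrightarrow> card Y = Suc j \<Longrightarrow>
      decomposable V (Suc j) (\<lambda>S. (if S = X then 1 else 0) - (if S = Y then 1 else 0))"
    and X: "X \<subseteq> V" "card X = Suc j"
  shows "decomposable V (Suc j) (\<lambda>S. if S = X then 1 else 0)"
proof -
  obtain x where "x \<in> X"
    using X(2) by (metis card.empty ex_in_conv nat.distinct(1))
  define U where "U = X - {x}"
  have U: "U \<subseteq> V" "card U = j"
    using X \<open>x \<in> X\<close> unfolding U_def by auto
  define Z where "Z = V - U"
  have "finite U"
    using U(1) V(1) finite_subset by blast
  then have "card Z = card V - j"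
    unfolding Z_def using U by (simp add: card_Diff_subset)
  then have Z: "finite Z" "card Z > 0"
    unfolding Z_def using V by auto
  have members: "insert z U \<subseteq> V" "card (insert z U) = Suc j" if "z \<in> Z" for z
    using that U \<open>finite U\<close> unfolding Z_def by auto
  have "decomposable V (Suc j) (\<lambda>S. (1 / real (card Z)) *
      ((\<Sum>z\<in>Z. (if S = X then 1 else 0) - (if S = insert z U then 1 else 0))
       + subsets_sum (int (Suc j) - 1) (\<lambda>W. if W = U then 1 else 0) S))"
    using diff[OF X members] Z(1)
    by (intro decomposable_mult decomposable_add decomposable_subsets_sum decomposable_sum) auto
  then show ?thesis
  proof (rule decomposable_cong)
    fix S
    assume S: "S \<subseteq> V" "card S = Suc j"
    have "(\<Sum>z\<in>Z. (if S = X then 1 else 0) - (if S = insert z U then 1 else 0))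
        + subsets_sum (int (Suc j) - 1) (\<lambda>W. if W = U then 1 else 0) S
        = real (card Z) * (if S = X then 1 else 0)"
    proof -
      have "finite S"
        using S(1) V(1) by (rule finite_subset)
      then have "subsets_sum (int (Suc j) - 1) (\<lambda>W. if W = U then 1 else 0) S = (if U \<subseteq> S then 1 else 0)"
        using subsets_sum_indicator[of S U] U(2) by simp
      then show ?thesis
        using sum_indicator_insert[OF V(1) U(1) S(1)] S(2) U(2) unfolding Z_def by (simp add: sum_subtractf)
    qed
    then show "(if S = X then 1 else 0) = 1 / real (card Z) *
        ((\<Sum>z\<in>Z. (if S = X then 1 else 0) - (if S = insert z U then 1 else 0))
         + subsets_sum (int (Suc j) - 1) (\<lambda>W. if W = U then 1 else 0) S)"
      using Z(2) by simp
  qed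
qed

lemma decomposable_of_indicators:
  assumes "finite V"
    and "\<And>X. X \<subseteq> V \<Longrightarrow> card X = j \<Longrightarrow> decomposable V j (\<lambda>S. if S = X then 1 else 0)"
  shows "decomposable V j \<phi>"
proof -
  define J where "J = {X. X \<subseteq> V \<and> card X = j}"
  have "decomposable V j (\<lambda>S. \<Sum>X\<in>J. \<phi> X * (if S = X then 1 else 0))"
    using assms unfolding J_def by (intro decomposable_sum decomposable_mult) auto
  then show ?thesis
    by (rule decomposable_cong) (use assms(1) in \<open>simp add: J_def if_distrib sum.delta' cong: if_cong\<close>)
qed

text \<open>For a, b \<notin> T the difference of the indicators of insert a T and insert b T is the
  antisymmetrization of the indicator of T, which is decomposable on V - {a, b} by induction.
  Exchanges connect all (j+1)-sets, and averaging over the indicators of the (j+1)-sets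
  containing a fixed j-set U leaves the lift of the indicator of U.\<close>
theorem decomposable_all:
  assumes "finite V" "2 * j \<le> card V"
  shows "decomposable V j \<phi>"
  using assms
proof (induction j arbitrary: V \<phi>)
  case 0
  then show ?case
    by (simp add: decomposable_level_0)
next
  case (Suc j)
  define \<delta> where "\<delta> X S = (if S = X then 1 else (0::real))" for X S :: "'a set"
  have exchange: "decomposable V (Suc j) (\<lambda>S. \<delta> (insert a T) S - \<delta> (insert b T) S)"
    if ab: "a \<in> V" "b \<in> V" "a \<noteq> b" and T: "T \<subseteq> V - {a, b}" "card T = j" for a b T
  proof -
    have "card (V - {a, b}) = card V - 2"
      using ab Suc.prems(1) by (simp add: card_Diff_subset)
    then have "decomposable (V - {a, b}) j (\<delta> T)"
      using Suc.prems by (intro Suc.IH) auto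
    then have "decomposable V (Suc j) (antisymmetrize a b (\<delta> T))"
      by (rule decomposable_antisymmetrize[OF Suc.prems(1) ab])
    moreover have "a \<notin> T" "b \<notin> T"
      using T(1) by auto
    ultimately show ?thesis
      using ab(3) unfolding \<delta>_def by (elim decomposable_cong) (simp add: antisymmetrize_indicator)
  qed
  have diff: "decomposable V (Suc j) (\<lambda>S. \<delta> X S - \<delta> Y S)"
    if "X \<subseteq> V" "card X = Suc j" "Y \<subseteq> V" "card Y = Suc j" for X Y
  proof (rule exchange_connected[where P = "\<lambda>X Y. decomposable V (Suc j) (\<lambda>S. \<delta> X S - \<delta> Y S)",
        OF Suc.prems(1) _ _ exchange that])
    show "decomposable V (Suc j) (\<lambda>S. \<delta> X S - \<delta> X S)" for X
      by (simp add: decomposable_zero)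
    show "decomposable V (Suc j) (\<lambda>S. \<delta> X S - \<delta> Z S)"
      if "decomposable V (Suc j) (\<lambda>S. \<delta> X S - \<delta> Y S)" "decomposable V (Suc j) (\<lambda>S. \<delta> Y S - \<delta> Z S)"
      for X Y Z
      using decomposable_add[OF that] by simp
  qed
  have "j < card V"
    using Suc.prems(2) by simp
  have "decomposable V (Suc j) (\<lambda>S. if S = X then 1 else 0)"
    if "X \<subseteq> V" "card X = Suc j" for X
    using Suc.prems(1) \<open>j < card V\<close> diff that unfolding \<delta>_def by (rule decomposable_indicator)
  then show ?case
    using Suc.prems(1) by (rule decomposable_of_indicators[rotated])
qed

text \<open>Lifts have vanishing signed sums at level j and are orthogonal to the transversal signs,
  so the transversal part of a function with vanishing signed sums is orthogonal to itself.\<close>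
lemma subsets_sum_if_signed_sums_vanish:
  assumes V: "finite V" "2 * j \<le> card V"
    and vanish: "\<forall>xs\<in>perms2 V j. signed_sum V j j h xs = 0"
  shows "\<exists>g. \<forall>S. S \<subseteq> V \<and> card S = j \<longrightarrow> h S = subsets_sum (int j - 1) g S"
proof -
  obtain g c where gc: "\<forall>S. S \<subseteq> V \<and> card S = j \<longrightarrow>
      h S = subsets_sum (int j - 1) g S + (\<Sum>xs\<in>perms2 V j. c xs * transversal_sign j xs S)"
    using decomposable_all[OF V] unfolding decomposable_def by blast
  define J where "J = {S. S \<subseteq> V \<and> card S = j}"
  define t where "t S = (\<Sum>xs\<in>perms2 V j. c xs * transversal_sign j xs S)" for S
  have orth: "(\<Sum>S\<in>J. F S * t S) = 0"
    if "\<forall>xs\<in>perms2 V j. signed_sum V j j F xs = 0" for F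
  proof -
    have "(\<Sum>S\<in>J. F S * t S) = (\<Sum>xs\<in>perms2 V j. c xs * (\<Sum>S\<in>J. F S * transversal_sign j xs S))"
      unfolding t_def by (simp add: sum_distrib_left sum_distrib_right sum.swap[of _ J] ac_simps)
    also have "\<dots> = 0"
      using that sum_mult_transversal_sign[OF V(1)] unfolding J_def by simp
    finally show ?thesis .
  qed
  have "(\<Sum>S\<in>J. (t S)\<^sup>2) = (\<Sum>S\<in>J. h S * t S) - (\<Sum>S\<in>J. subsets_sum (int j - 1) g S * t S)"
    using gc unfolding J_def t_def by (simp add: sum_subtractf[symmetric] power2_eq_square algebra_simps)
  also have "\<dots> = 0"
    using orth[OF vanish] orth signed_sum_subsets_sum_eq_0[OF V(1)] by simp
  finally have "\<forall>S\<in>J. t S = 0"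
    using V(1) by (simp add: J_def sum_nonneg_eq_0_iff)
  then show ?thesis
    using gc unfolding J_def t_def by auto
qed

section \<open>Descent to level l\<close>

lemma subsets_sum_lower_level:
  assumes V: "finite V" "2 * k \<le> card V" and "j \<le> k"
    and f: "\<forall>R. R \<subseteq> V \<and> card R = k \<longrightarrow> f R = subsets_sum (int j) h R"
    and vanish: "\<forall>xs\<in>perms2 V j. signed_sum V k j f xs = 0"
  shows "\<exists>g. \<forall>R. R \<subseteq> V \<and> card R = k \<longrightarrow> f R = subsets_sum (int j - 1) g R"
proof -
  have "signed_sum V j j h xs = 0" if xs: "xs \<in> perms2 V j" for xs
  proof -
    have "signed_sum V k j f xs = signed_sum V k j (subsets_sum (int j) h) xs"
      unfolding signed_sum_def using f by (intro sum.cong refl) (auto simp: admissible_def)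
    moreover have "real ((card V - 2 * j) choose (k - j)) > 0"
      using V(2) \<open>j \<le> k\<close> by simp
    ultimately show ?thesis
      using signed_sum_subsets_sum_same_level[OF V(1) xs \<open>j \<le> k\<close>] vanish xs by simp
  qed
  moreover have "2 * j \<le> card V"
    using V(2) \<open>j \<le> k\<close> by simp
  ultimately obtain g where g: "\<forall>S. S \<subseteq> V \<and> card S = j \<longrightarrow> h S = subsets_sum (int j - 1) g S"
    using subsets_sum_if_signed_sums_vanish[OF V(1)] by blast
  have "f R = subsets_sum (int j - 1) (\<lambda>U. real (k - j + 1) * g U) R"
    if R: "R \<subseteq> V" "card R = k" for R
  proof -
    have "f R = subsets_sum (int j) (subsets_sum (int j - 1) g) R"
      using f g R by (auto intro!: subsets_sum_cong)
    also have "\<dots> = real (k - j + 1) * subsets_sum (int j - 1) g R"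
      using subsets_sum_subsets_sum_pred[OF finite_subset[OF R(1) V(1)], of j g] R(2) \<open>j \<le> k\<close> by simp
    finally show ?thesis
      by (simp add: subsets_sum_mult)
  qed
  then show ?thesis
    by blast
qed

lemma subsets_sum_if_level_weights_vanish:
  assumes V: "finite V" "2 * k \<le> card V" and "l \<le> k"
    and vanish: "\<forall>r. l \<le> r \<and> r \<le> k \<longrightarrow> level_weight V k r f = 0"
  shows "\<exists>g. \<forall>R. R \<subseteq> V \<and> card R = k \<longrightarrow> f R = subsets_sum (int l - 1) g R"
proof -
  have "\<exists>g. \<forall>R. R \<subseteq> V \<and> card R = k \<longrightarrow> f R = subsets_sum (int n - 1) g R"
    if "n \<le> Suc k" "l \<le> n" for n
    using that
  proof (induction n rule: inc_induct)
    case base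
    have "f R = subsets_sum (int k) f R" if "R \<subseteq> V" "card R = k" for R
      using subsets_sum_self[OF finite_subset[OF that(1) V(1)], of f] that(2) by simp
    then show ?case
      by auto
  next
    case (step n)
    then obtain g where "\<forall>R. R \<subseteq> V \<and> card R = k \<longrightarrow> f R = subsets_sum (int n) g R"
      by auto
    moreover have "\<forall>xs\<in>perms2 V n. signed_sum V k n f xs = 0"
      using vanish step level_weight_eq_0_iff[OF V(1)] by simp
    ultimately show ?case
      using subsets_sum_lower_level[OF V] step.hyps by simp
  qed
  then show ?thesis
    using \<open>l \<le> k\<close> by simp
qed

section \<open>Uniqueness of the lifted function\<close>

lemma subsets_sum_const:
  assumes "finite R" "\<And>S. S \<subseteq> R \<Longrightarrow> card S = m \<Longrightarrow> g S = c"
  shows "subsets_sum (int m) g R = real (card R choose m) * c"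
proof -
  have "subsets_sum (int m) g R = (\<Sum>S | S \<subseteq> R \<and> card S = m. c)"
    unfolding subsets_sum_nat using assms(2) by (intro sum.cong refl) auto
  then show ?thesis
    using assms(1) by (simp add: n_subsets)
qed

lemma subsets_sum_const_eq_0:
  assumes "finite V" "m \<le> k" "k \<le> card V"
    and "\<forall>R. R \<subseteq> V \<and> card R = k \<longrightarrow> subsets_sum (int m) g R = 0"
    and "\<And>S. S \<subseteq> V \<Longrightarrow> card S = m \<Longrightarrow> g S = c"
  shows "c = 0"
proof -
  obtain R where R: "R \<subseteq> V" "card R = k"
    using obtain_subset_with_card_n[OF assms(3)] by auto
  then have "real (k choose m) * c = 0"
    using assms(4,5) subsets_sum_const[OF finite_subset[OF R(1) assms(1)], of m g c] by auto
  moreover have "k choose m > 0"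
    using assms(2) by simp
  ultimately show ?thesis
    by simp
qed

lemma subsets_sum_exchange:
  assumes "finite Q" "a \<notin> Q" "b \<notin> Q"
  shows "subsets_sum d (\<lambda>X. g (insert a X) - g (insert b X)) Q
    = subsets_sum (d + 1) g (insert a Q) - subsets_sum (d + 1) g (insert b Q)"
  using subsets_sum_insert[OF assms(1,2), of d g] subsets_sum_insert[OF assms(1,3), of d g]
  by (simp add: subsets_sum_diff)

lemma subsets_sum_exchange_eq_0:
  assumes V: "finite V" "a \<in> V" "b \<in> V" and Q: "Q \<subseteq> V - {a, b}" "card Q = k - 1" "0 < k"
    and vanish: "\<forall>R. R \<subseteq> V \<and> card R = k \<longrightarrow> subsets_sum (int (Suc m)) g R = 0"
  shows "subsets_sum (int m) (\<lambda>X. g (insert a X) - g (insert b X)) Q = 0"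
proof -
  have Q': "finite Q" "a \<notin> Q" "b \<notin> Q"
    using finite_subset[OF _ V(1)] Q(1) by blast+
  then have "insert c Q \<subseteq> V \<and> card (insert c Q) = k" if "c \<in> {a, b}" for c
    using that V Q by auto
  then have "subsets_sum (int (Suc m)) g (insert c Q) = 0" if "c \<in> {a, b}" for c
    using vanish that by blast
  then show ?thesis
    using subsets_sum_exchange[OF Q', of "int m" g] by (simp add: add.commute)
qed

text \<open>Induction on m: the hypothesis on V - {a, b}, applied to
  X \<mapsto> g (insert a X) - g (insert b X), makes g invariant under exchanges and hence
  constant on m-sets; a k-set contains (k choose m) of them.\<close>
lemma subsets_sum_eq_0_imp_eq_0:
  assumes "finite V" "m \<le> k" "m + k \<le> card V"
    and "\<forall>R. R \<subseteq> V \<and> card R = k \<longrightarrow> subsets_sum (int m) g R = 0"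
    and "U \<subseteq> V" "card U = m"
  shows "g U = 0"
  using assms
proof (induction m arbitrary: k V g U)
  case 0
  have "g S = g U" if "S \<subseteq> V" "card S = 0" for S
  proof -
    have "S = {}" "U = {}"
      using that "0.prems"(1,5,6) finite_subset by fastforce+
    then show ?thesis
      by simp
  qed
  then show ?case
    using subsets_sum_const_eq_0[OF "0.prems"(1,2) _ "0.prems"(4)] "0.prems"(3) by simp
next
  case (Suc m)
  note V = Suc.prems(1) and g0 = Suc.prems(4)
  have exchange: "g (insert a W) = g (insert b W)"
    if ab: "a \<in> V" "b \<in> V" "a \<noteq> b" and W: "W \<subseteq> V - {a, b}" "card W = m" for a b W
  proof -
    let ?V' = "V - {a, b}"
    have "card ?V' = card V - 2"
      using ab V by (simp add: card_Diff_subset)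
    then have "finite ?V'" "m \<le> k - 1" "m + (k - 1) \<le> card ?V'"
      using V Suc.prems(2,3) by auto
    moreover have "\<forall>Q. Q \<subseteq> ?V' \<and> card Q = k - 1 \<longrightarrow>
        subsets_sum (int m) (\<lambda>X. g (insert a X) - g (insert b X)) Q = 0"
      using subsets_sum_exchange_eq_0[OF V ab(1,2) _ _ _ g0] Suc.prems(2) by simp
    ultimately have "g (insert a W) - g (insert b W) = 0"
      using Suc.IH[of ?V' "k - 1" "\<lambda>X. g (insert a X) - g (insert b X)" W] W by simp
    then show ?thesis
      by simp
  qed
  have "g S = g U" if "S \<subseteq> V" "card S = Suc m" for S
    by (rule exchange_connected[where P = "\<lambda>X Y. g X = g Y", OF V _ _ exchange that Suc.prems(5,6)])
      simp_all
  then show ?case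
    using subsets_sum_const_eq_0[OF V Suc.prems(2) _ g0] Suc.prems(3) by simp
qed

lemma level_weight_subsets_sum_eq_0:
  assumes "finite V" "l \<le> r"
    and "\<forall>R. R \<subseteq> V \<and> card R = k \<longrightarrow> f R = subsets_sum (int l - 1) h R"
  shows "level_weight V k r f = 0"
  unfolding level_weight_eq_0_iff[OF assms(1)]
proof
  fix xs
  assume xs: "xs \<in> perms2 V r"
  have "signed_sum V k r f xs = signed_sum V k r (subsets_sum (int l - 1) h) xs"
    unfolding signed_sum_def using assms(3) by (intro sum.cong refl) (auto simp: admissible_def)
  also have "\<dots> = 0"
    using signed_sum_subsets_sum_eq_0[OF assms(1) xs] assms(2) by simp
  finally show "signed_sum V k r f xs = 0" .
qed

lemma ex1_extensional_subsets_sum: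
  assumes V: "finite V" "2 * k \<le> card V" "l \<le> k"
    and g: "\<forall>R. R \<subseteq> V \<and> card R = k \<longrightarrow> f R = subsets_sum (int l - 1) g R"
  shows "\<exists>!h. h \<in> extensional {S. S \<subseteq> V \<and> int (card S) = int l - 1} \<and>
    (\<forall>R. R \<subseteq> V \<and> card R = k \<longrightarrow> f R = subsets_sum (int l - 1) h R)"
  (is "\<exists>!h. h \<in> extensional ?D \<and> ?lift h")
proof (rule ex1I)
  have "subsets_sum (int l - 1) g R = subsets_sum (int l - 1) (restrict g ?D) R" if "R \<subseteq> V" for R
    using that by (intro subsets_sum_cong) auto
  then show "restrict g ?D \<in> extensional ?D \<and> ?lift (restrict g ?D)"
    using g by simp
next
  fix h
  assume h: "h \<in> extensional ?D \<and> ?lift h"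
  show "h = restrict g ?D"
  proof (rule extensionalityI[of h ?D])
    show "h \<in> extensional ?D" "restrict g ?D \<in> extensional ?D"
      using h by auto
    fix S
    assume S: "S \<in> ?D"
    then obtain m where m: "l = Suc m" "card S = m" "S \<subseteq> V"
      by (cases l) auto
    have "\<forall>R. R \<subseteq> V \<and> card R = k \<longrightarrow> subsets_sum (int m) (\<lambda>U. h U - g U) R = 0"
      using h g m(1) by (simp add: subsets_sum_diff)
    moreover have "m \<le> k" "m + k \<le> card V"
      using V m(1) by auto
    ultimately have "h S - g S = 0"
      using subsets_sum_eq_0_imp_eq_0[OF V(1), of m k "\<lambda>U. h U - g U" S] m(2,3) by simp
    then show "h S = restrict g ?D S"
      using S by simp
  qed
qed

theorem proposition2p4:
  fixes V :: "'a set" and k l :: nat and f :: "'a set \<Rightarrow> real"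
  assumes "finite V" and "card V \<ge> 2 * k" and "k \<ge> l"
  shows "(\<forall>r. l \<le> r \<and> r \<le> k \<longrightarrow> level_weight V k r f = 0) \<longleftrightarrow>
    (\<exists>!h. h \<in> extensional {S. S \<subseteq> V \<and> int (card S) = int l - 1} \<and>
       (\<forall>R. R \<subseteq> V \<and> card R = k \<longrightarrow>
          f R = (\<Sum>S\<in>{S. S \<subseteq> R \<and> int (card S) = int l - 1}. h S)))"
proof -
  have lift: "(\<Sum>S\<in>{S. S \<subseteq> R \<and> int (card S) = int l - 1}. h S) = subsets_sum (int l - 1) h R" for h R
    by (simp add: subsets_sum_def)
  have "(\<forall>r. l \<le> r \<and> r \<le> k \<longrightarrow> level_weight V k r f = 0) \<longleftrightarrow>
    (\<exists>!h. h \<in> extensional {S. S \<subseteq> V \<and> int (card S) = int l - 1} \<and>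
       (\<forall>R. R \<subseteq> V \<and> card R = k \<longrightarrow> f R = subsets_sum (int l - 1) h R))"
    (is "?vanish \<longleftrightarrow> (\<exists>!h. h \<in> extensional ?D \<and> ?lift h)")
  proof
    assume ?vanish
    then obtain g where "?lift g"
      using subsets_sum_if_level_weights_vanish[OF assms] by blast
    then show "\<exists>!h. h \<in> extensional ?D \<and> ?lift h"
      by (rule ex1_extensional_subsets_sum[OF assms])
  next
    assume "\<exists>!h. h \<in> extensional ?D \<and> ?lift h"
    then obtain h where "?lift h"
      by (auto dest: ex1_implies_ex)
    then show ?vanish
      using level_weight_subsets_sum_eq_0[OF assms(1)] by blast
  qed
  then show ?thesis
    unfolding lift .
qed

end
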